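(* Let $p_1,\dots,p_k\in\mathbb{K}[x_1,\dots,x_d]$ be pure difference binomials and let $L\subseteq\mathbb{Z}^d$ be the lattice spanned by their exponent vectors. There exists a linear loop with a diagonal update matrix $M\in\mathbb{Q}^{d\times d}$ (and initial vector in $\mathbb{Q}^d$) whose invariant ideal is $I_{\operatorname{Sat}(L)}$.
   Context: $\mathbb{K}=\overline{\mathbb{Q}}$. A pure difference binomial is $\bm{x}^{\bm{\alpha}}-\bm{x}^{\bm{\beta}}$ with $\bm{\alpha},\bm{\beta}\in\mathbb{N}^d$; its exponent vector is $\bm{\alpha}-\bm{\beta}$. $\operatorname{Sat}(L)=\{\bm{u}\in\mathbb{Z}^d : c\bm{u}\in L\text{ for some } c\in\mathbb{Z}\setminus\{0\}\}$; the lattice ideal of a lattice $L'$ is $I_{L'}=\langle \bm{x}^{\bm{\alpha}}-\bm{x}^{\bm{\beta}} : \bm{\alpha},\bm{\beta}\in\mathbb{N}^d,\ \bm{\alpha}-\bm{\beta}\in L'\rangle$. A linear loop with initial vector $\bm{s}$ and update matrix $M$ has orbit $M^n\bm{s}$, $n\ge0$; a polynomial $P\in\mathbb{K}[\bm{x}]$ is an invariant if $P(M^n\bm{s})=0$ for all $n\ge0$, and the invariant ideal is the ideal of all invariants. *)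

theory Defs
  imports "HOL-Library.Poly_Mapping" "HOL-Computational_Algebra.Polynomial" "Jordan_Normal_Form.Matrix"
begin

text \<open>The field K = algebraic closure of Q is rendered as the algebraic
  complex numbers; K[x_1..x_d] is the set of polynomials with algebraic coefficients
  whose monomials only involve the first d variables.\<close>

type_synonym mpoly = "(nat \<Rightarrow>\<^sub>0 nat) \<Rightarrow>\<^sub>0 complex"

definition mon_in_vars :: "nat \<Rightarrow> (nat \<Rightarrow>\<^sub>0 nat) \<Rightarrow> bool" where
  "mon_in_vars d m \<longleftrightarrow> Poly_Mapping.keys m \<subseteq> {..<d}"

definition Kpoly :: "nat \<Rightarrow> mpoly \<Rightarrow> bool" where
  "Kpoly d p \<longleftrightarrow> (\<forall>m\<in>Poly_Mapping.keys p. mon_in_vars d m) \<and> (\<forall>m. algebraic (Poly_Mapping.lookup p m))"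

definition monom :: "(nat \<Rightarrow>\<^sub>0 nat) \<Rightarrow> mpoly" where
  "monom a = Poly_Mapping.single a 1"

definition eval_mpoly :: "mpoly \<Rightarrow> (nat \<Rightarrow> complex) \<Rightarrow> complex" where
  "eval_mpoly p x = (\<Sum>m\<in>Poly_Mapping.keys p. Poly_Mapping.lookup p m * (\<Prod>i\<in>Poly_Mapping.keys m. x i ^ Poly_Mapping.lookup m i))"

definition gen_ideal :: "nat \<Rightarrow> mpoly set \<Rightarrow> mpoly set" where
  "gen_ideal d G = {p. \<exists>(n::nat) q g. (\<forall>i<n. Kpoly d (q i) \<and> g i \<in> G) \<and> p = (\<Sum>i<n. q i * g i)}"

definition exp_vec :: "(nat \<Rightarrow>\<^sub>0 nat) \<Rightarrow> (nat \<Rightarrow>\<^sub>0 nat) \<Rightarrow> nat \<Rightarrow> int" where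
  "exp_vec a b = (\<lambda>i. int (Poly_Mapping.lookup a i) - int (Poly_Mapping.lookup b i))"

definition zvec :: "nat \<Rightarrow> (nat \<Rightarrow> int) \<Rightarrow> bool" where
  "zvec d u \<longleftrightarrow> (\<forall>i\<ge>d. u i = 0)"

definition lattice_span :: "nat \<Rightarrow> (nat \<Rightarrow> nat \<Rightarrow> int) \<Rightarrow> (nat \<Rightarrow> int) set" where
  "lattice_span k v = {u. \<exists>c :: nat \<Rightarrow> int. u = (\<lambda>i. \<Sum>j<k. c j * v j i)}"

definition Sat :: "nat \<Rightarrow> (nat \<Rightarrow> int) set \<Rightarrow> (nat \<Rightarrow> int) set" where
  "Sat d L = {u. zvec d u \<and> (\<exists>c::int. c \<noteq> 0 \<and> (\<lambda>i. c * u i) \<in> L)}"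

definition lattice_ideal :: "nat \<Rightarrow> (nat \<Rightarrow> int) set \<Rightarrow> mpoly set" where
  "lattice_ideal d L' = gen_ideal d {monom a - monom b | a b.
      mon_in_vars d a \<and> mon_in_vars d b \<and> exp_vec a b \<in> L'}"

definition invariant_ideal :: "nat \<Rightarrow> rat mat \<Rightarrow> rat vec \<Rightarrow> mpoly set" where
  "invariant_ideal d M s = {P. Kpoly d P \<and>
     (\<forall>n. eval_mpoly P (\<lambda>i. if i < d then of_rat (((M ^\<^sub>m n) *\<^sub>v s) $ i) else 0) = 0)}"

end

theory Submission
  imports Defs "HOL-Computational_Algebra.Primes"
begin

text \<open>Let \<open>\<phi>\<close> be an integer multiple of the orthogonal projection of \<open>\<rat>\<^sup>d\<close> onto the
  orthogonal complement of \<open>L\<close>, so that the integer points of its kernel form \<open>Sat(L)\<close>, and put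
  \<open>\<lambda>\<^sub>i = \<Prod>\<^sub>j p\<^sub>j\<^bsup>\<phi>(e\<^sub>i)\<^sub>j\<^esup>\<close> for distinct primes \<open>p\<^sub>j\<close>. By unique factorisation,
  \<open>\<lambda>\<^sup>a = \<lambda>\<^sup>b\<close> iff \<open>a - b \<in> Sat(L)\<close>. The loop with \<open>M = diag(\<lambda>)\<close> and \<open>s = (1, \<dots>, 1)\<close> has
  orbit \<open>(\<lambda>\<^sup>n)\<close>, on which a monomial \<open>x\<^sup>m\<close> takes the values \<open>(\<lambda>\<^sup>m)\<^sup>n\<close>. Distinct
  geometric sequences being linearly independent, a polynomial vanishes on the orbit iff
  the coefficients of the monomials with a common value of \<open>\<lambda>\<^sup>m\<close> sum to zero, i.e. iff it is
  a combination of binomials \<open>x\<^sup>a - x\<^sup>b\<close> with \<open>\<lambda>\<^sup>a = \<lambda>\<^sup>b\<close>. As \<open>K\<close> is rendered as the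
  algebraic numbers inside \<open>\<complex>\<close>, their closure under sums and products is needed as well.\<close>

section \<open>Algebraic numbers form a ring\<close>

text \<open>\<open>x\<close> is algebraic iff its powers lie in a finite-dimensional \<open>\<rat>\<close>-subspace of \<open>\<complex>\<close>.\<close>
interpretation Qvs: vector_space "\<lambda>(q::rat) (z::complex). of_rat q * z"
  by unfold_locales (auto simp: algebra_simps of_rat_add of_rat_mult)

lemma algebraic_if_rat_power_combination_eq_0:
  fixes z :: complex
  assumes "finite I" "(\<Sum>l\<in>I. of_rat (c l) * z ^ l) = 0" "l0 \<in> I" "c l0 \<noteq> 0"
  shows "algebraic z"
proof (rule algebraicI')
  let ?p = "\<Sum>l\<in>I. Polynomial.monom (of_rat (c l) :: complex) l"
  have coeff: "coeff ?p i = (if i \<in> I then of_rat (c i) else 0)" for i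
    using assms(1) by (simp add: coeff_sum coeff_monom)
  show "coeff ?p i \<in> \<rat>" for i
    by (simp add: coeff)
  show "?p \<noteq> 0"
    using coeff[of l0] assms(3,4) by auto
  show "poly ?p z = 0"
    using assms(2) by (simp add: poly_sum poly_monom)
qed

lemma algebraic_if_powers_in_finite_span:
  fixes z :: complex
  assumes "finite B" and "\<And>l. z ^ l \<in> Qvs.span B"
  shows "algebraic z"
proof (cases "inj_on (\<lambda>l. z ^ l) {..card B}")
  case True
  let ?A = "(\<lambda>l. z ^ l) ` {..card B}"
  have "Qvs.dependent ?A"
  proof (rule ccontr)
    assume "\<not> Qvs.dependent ?A"
    from Qvs.independent_span_bound[OF assms(1) this] assms(2)
    have "card ?A \<le> card B" by auto
    with True show False by (simp add: card_image)
  qed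
  then obtain t u w where t: "finite t" "t \<subseteq> ?A" "(\<Sum>v\<in>t. of_rat (u v) * v) = 0"
      and w: "w \<in> t" "u w \<noteq> 0"
    unfolding Qvs.dependent_explicit by blast
  from t(2) obtain I where I: "I \<subseteq> {..card B}" "t = (\<lambda>l. z ^ l) ` I"
    by (meson subset_image_iff)
  with w obtain l0 where l0: "l0 \<in> I" "w = z ^ l0" by blast
  have "inj_on (\<lambda>l. z ^ l) I"
    using True I(1) by (rule inj_on_subset)
  then have "(\<Sum>l\<in>I. of_rat (u (z ^ l)) * z ^ l) = 0"
    using t(3) by (simp add: I(2) sum.reindex)
  moreover have "finite I"
    using I(1) finite_subset by blast
  ultimately show ?thesis
    using l0 w(2) by (intro algebraic_if_rat_power_combination_eq_0[of I _ z l0]) auto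
next
  case False
  then obtain a b where "a \<noteq> b" "z ^ a = z ^ b"
    unfolding inj_on_def by blast
  then show ?thesis
    by (intro algebraic_if_rat_power_combination_eq_0[of "{a, b}" "\<lambda>l. if l = a then 1 else -1"])
      auto
qed

lemma algebraic_power_eq_rat_combination:
  fixes x :: complex
  assumes "algebraic x"
  obtains n r where "n \<ge> 1" "x ^ n = (\<Sum>k<n. of_rat (r k) * x ^ k)"
proof -
  obtain p where p: "p \<noteq> 0" "poly (map_poly of_int p) x = 0"
    using algebraicE'[OF assms] .
  define n where "n = degree p"
  define c where "c i = (of_int (coeff p i) :: complex)" for i
  have lc: "c n \<noteq> 0"
    using p(1) by (simp add: c_def n_def)
  have root: "(\<Sum>k<n. c k * x ^ k) + c n * x ^ n = 0"
    using p(2)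
    by (simp add: poly_altdef c_def n_def lessThan_Suc_atMost[symmetric] degree_map_poly coeff_map_poly)
  have "c n * x ^ n = - (\<Sum>k<n. c k * x ^ k)"
    using root by (simp add: eq_neg_iff_add_eq_0 add.commute)
  then have "x ^ n = (\<Sum>k<n. (- c k / c n) * x ^ k)"
    using lc by (simp add: field_simps sum_divide_distrib[symmetric] sum_negf)
  also have "\<dots> = (\<Sum>k<n. of_rat (- of_int (coeff p k) / of_int (coeff p n)) * x ^ k)"
    by (simp add: c_def of_rat_minus of_rat_divide)
  finally have "x ^ n = \<dots>" .
  moreover have "n \<ge> 1"
    using root lc by (cases n) auto
  ultimately show ?thesis
    using that[of n "\<lambda>k. - of_int (coeff p k) / of_int (coeff p n)"] by simp
qed

lemma Qvs_span_mult_closed: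
  assumes "\<And>b. b \<in> B \<Longrightarrow> x * b \<in> Qvs.span B" and "w \<in> Qvs.span B"
  shows "x * w \<in> Qvs.span B"
  using assms(2)
proof (induction rule: Qvs.span_induct_alt)
  case base
  then show ?case by (simp add: Qvs.span_zero)
next
  case (step c b w)
  have "x * (of_rat c * b + w) = of_rat c * (x * b) + x * w"
    by (simp add: algebra_simps)
  then show ?case
    using step assms(1) Qvs.span_add Qvs.span_scale by metis
qed

lemma times_power_in_span:
  fixes x w :: complex
  assumes x: "x ^ n = (\<Sum>k<n. of_rat (r k) * x ^ k)" and "i < n"
    and span: "\<And>k. k < n \<Longrightarrow> x ^ k * w \<in> Qvs.span B"
  shows "x * (x ^ i * w) \<in> Qvs.span B"
proof (cases "Suc i < n")
  case True
  then show ?thesis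
    using span[of "Suc i"] by (simp add: mult.assoc)
next
  case False
  with \<open>i < n\<close> have "Suc i = n"
    by simp
  then have "x * (x ^ i * w) = x ^ n * w"
    by (simp add: mult.assoc flip: power_Suc)
  also have "\<dots> = (\<Sum>k<n. of_rat (r k) * (x ^ k * w))"
    by (simp add: x sum_distrib_right mult.assoc)
  also have "\<dots> \<in> Qvs.span B"
    using span by (intro Qvs.span_sum) (simp add: Qvs.span_scale)
  finally show ?thesis .
qed

lemma algebraic_common_finite_span:
  fixes x y :: complex
  assumes "algebraic x" "algebraic y"
  obtains B where "finite B" "1 \<in> Qvs.span B"
    "\<And>w. w \<in> Qvs.span B \<Longrightarrow> x * w \<in> Qvs.span B"
    "\<And>w. w \<in> Qvs.span B \<Longrightarrow> y * w \<in> Qvs.span B"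
proof -
  obtain n r where n: "n \<ge> 1" "x ^ n = (\<Sum>k<n. of_rat (r k) * x ^ k)"
    using algebraic_power_eq_rat_combination[OF assms(1)] .
  obtain m s where m: "m \<ge> 1" "y ^ m = (\<Sum>k<m. of_rat (s k) * y ^ k)"
    using algebraic_power_eq_rat_combination[OF assms(2)] .
  define B where "B = (\<lambda>(i, j). x ^ i * y ^ j) ` ({..<n} \<times> {..<m})"
  have B: "x ^ i * y ^ j \<in> Qvs.span B" if "i < n" "j < m" for i j
    using that by (intro Qvs.span_base) (force simp: B_def)
  show ?thesis
  proof (rule that)
    show "finite B"
      by (simp add: B_def)
    show "1 \<in> Qvs.span B"
      using B[of 0 0] n(1) m(1) by simp
    show "x * w \<in> Qvs.span B" if "w \<in> Qvs.span B" for w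
      using that
    proof (rule Qvs_span_mult_closed[rotated])
      fix b assume "b \<in> B"
      then obtain i j where "i < n" "j < m" "b = x ^ i * y ^ j"
        by (auto simp: B_def)
      then show "x * b \<in> Qvs.span B"
        using times_power_in_span[OF n(2), of i "y ^ j"] B by simp
    qed
    show "y * w \<in> Qvs.span B" if "w \<in> Qvs.span B" for w
      using that
    proof (rule Qvs_span_mult_closed[rotated])
      fix b assume "b \<in> B"
      then obtain i j where "i < n" "j < m" "b = y ^ j * x ^ i"
        by (auto simp: B_def)
      then show "y * b \<in> Qvs.span B"
        using times_power_in_span[OF m(2), of j "x ^ i"] B by (simp add: mult.commute)
    qed
  qed
qed

lemma algebraic_add:
  fixes x y :: complex
  assumes "algebraic x" "algebraic y"
  shows "algebraic (x + y)"
proof -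
  obtain B where B: "finite B" "1 \<in> Qvs.span B"
    "\<And>w. w \<in> Qvs.span B \<Longrightarrow> x * w \<in> Qvs.span B"
    "\<And>w. w \<in> Qvs.span B \<Longrightarrow> y * w \<in> Qvs.span B"
    using algebraic_common_finite_span[OF assms] by blast
  have "(x + y) ^ l \<in> Qvs.span B" for l
    by (induction l) (auto simp: B distrib_right intro: Qvs.span_add)
  with B(1) show ?thesis
    by (rule algebraic_if_powers_in_finite_span)
qed

lemma algebraic_mult:
  fixes x y :: complex
  assumes "algebraic x" "algebraic y"
  shows "algebraic (x * y)"
proof -
  obtain B where B: "finite B" "1 \<in> Qvs.span B"
    "\<And>w. w \<in> Qvs.span B \<Longrightarrow> x * w \<in> Qvs.span B"
    "\<And>w. w \<in> Qvs.span B \<Longrightarrow> y * w \<in> Qvs.span B"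
    using algebraic_common_finite_span[OF assms] by blast
  have "(x * y) ^ l \<in> Qvs.span B" for l
    by (induction l) (auto simp: B mult.assoc)
  with B(1) show ?thesis
    by (rule algebraic_if_powers_in_finite_span)
qed

section \<open>Polynomials with algebraic coefficients\<close>

definition monom_eval :: "(nat \<Rightarrow> 'a::comm_semiring_1) \<Rightarrow> (nat \<Rightarrow>\<^sub>0 nat) \<Rightarrow> 'a" where
  "monom_eval x m = (\<Prod>i\<in>Poly_Mapping.keys m. x i ^ Poly_Mapping.lookup m i)"

lemma monom_eval_superset:
  "finite S \<Longrightarrow> Poly_Mapping.keys m \<subseteq> S \<Longrightarrow> monom_eval x m = (\<Prod>i\<in>S. x i ^ Poly_Mapping.lookup m i)"
  unfolding monom_eval_def by (rule prod.mono_neutral_left) (auto simp: in_keys_iff)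

lemma monom_eval_add: "monom_eval x (a + b) = monom_eval x a * monom_eval x b"
proof -
  let ?S = "Poly_Mapping.keys a \<union> Poly_Mapping.keys b"
  have "monom_eval x (a + b) = (\<Prod>i\<in>?S. x i ^ Poly_Mapping.lookup (a + b) i)"
    by (rule monom_eval_superset) (auto simp: keys_add)
  also have "\<dots> = (\<Prod>i\<in>?S. x i ^ Poly_Mapping.lookup a i) * (\<Prod>i\<in>?S. x i ^ Poly_Mapping.lookup b i)"
    by (simp add: lookup_add power_add prod.distrib)
  also have "\<dots> = monom_eval x a * monom_eval x b"
    by (subst (1 2) monom_eval_superset[of ?S]) auto
  finally show ?thesis .
qed

lemma monom_eval_in_vars:
  "mon_in_vars d m \<Longrightarrow> monom_eval x m = (\<Prod>i<d. x i ^ Poly_Mapping.lookup m i)"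
  unfolding mon_in_vars_def by (rule monom_eval_superset) auto

lemma eval_mpoly_conv_monom_eval:
  "eval_mpoly P x = (\<Sum>m\<in>Poly_Mapping.keys P. Poly_Mapping.lookup P m * monom_eval x m)"
  unfolding eval_mpoly_def monom_eval_def ..

lemma eval_mpoly_superset:
  "finite S \<Longrightarrow> Poly_Mapping.keys P \<subseteq> S \<Longrightarrow>
   eval_mpoly P x = (\<Sum>m\<in>S. Poly_Mapping.lookup P m * monom_eval x m)"
  unfolding eval_mpoly_conv_monom_eval by (rule sum.mono_neutral_left) (auto simp: in_keys_iff)

lemma eval_mpoly_zero [simp]: "eval_mpoly 0 x = 0"
  by (simp add: eval_mpoly_def)

lemma eval_mpoly_add: "eval_mpoly (P + Q) x = eval_mpoly P x + eval_mpoly Q x"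
proof -
  let ?S = "Poly_Mapping.keys P \<union> Poly_Mapping.keys Q"
  have "eval_mpoly (P + Q) x = (\<Sum>m\<in>?S. Poly_Mapping.lookup (P + Q) m * monom_eval x m)"
    by (rule eval_mpoly_superset) (auto simp: keys_add)
  also have "\<dots> = (\<Sum>m\<in>?S. Poly_Mapping.lookup P m * monom_eval x m)
      + (\<Sum>m\<in>?S. Poly_Mapping.lookup Q m * monom_eval x m)"
    by (simp add: lookup_add distrib_right sum.distrib)
  also have "\<dots> = eval_mpoly P x + eval_mpoly Q x"
    by (subst (1 2) eval_mpoly_superset[of ?S]) auto
  finally show ?thesis .
qed

lemma eval_mpoly_uminus: "eval_mpoly (- P) x = - eval_mpoly P x"
  by (simp add: eval_mpoly_conv_monom_eval sum_negf)

lemma eval_mpoly_diff: "eval_mpoly (P - Q) x = eval_mpoly P x - eval_mpoly Q x"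
  using eval_mpoly_add[of P "- Q" x] by (simp add: eval_mpoly_uminus)

lemma eval_mpoly_sum: "eval_mpoly (sum f A) x = (\<Sum>a\<in>A. eval_mpoly (f a) x)"
  by (induction A rule: infinite_finite_induct) (auto simp: eval_mpoly_add)

lemma eval_mpoly_single: "eval_mpoly (Poly_Mapping.single a c) x = c * monom_eval x a"
  by (simp add: eval_mpoly_conv_monom_eval)

lemma sum_single_lookup_keys:
  "(\<Sum>a\<in>Poly_Mapping.keys P. Poly_Mapping.single a (Poly_Mapping.lookup P a)) = P"
  by (rule poly_mapping_eqI) (simp add: lookup_sum lookup_single when_def in_keys_iff)

lemma mpoly_mult_conv_sum_single:
  "(P::mpoly) * Q = (\<Sum>a\<in>Poly_Mapping.keys P. \<Sum>b\<in>Poly_Mapping.keys Q.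
    Poly_Mapping.single (a + b) (Poly_Mapping.lookup P a * Poly_Mapping.lookup Q b))"
  by (subst (1 2) sum_single_lookup_keys[symmetric]) (simp add: sum_product mult_single)

lemma eval_mpoly_mult: "eval_mpoly (P * Q) x = eval_mpoly P x * eval_mpoly Q x"
  unfolding mpoly_mult_conv_sum_single eval_mpoly_sum eval_mpoly_single monom_eval_add
  by (simp add: eval_mpoly_conv_monom_eval sum_product algebra_simps)

lemma mon_in_vars_add: "mon_in_vars d a \<Longrightarrow> mon_in_vars d b \<Longrightarrow> mon_in_vars d (a + b)"
  unfolding mon_in_vars_def using keys_add[of a b] by auto

lemma Kpoly_zero [simp]: "Kpoly d 0"
  by (simp add: Kpoly_def)

lemma Kpoly_add: "Kpoly d P \<Longrightarrow> Kpoly d Q \<Longrightarrow> Kpoly d (P + Q)"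
  unfolding Kpoly_def using keys_add[of P Q] by (auto simp: lookup_add algebraic_add)

lemma Kpoly_uminus: "Kpoly d P \<Longrightarrow> Kpoly d (- P)"
  by (auto simp: Kpoly_def)

lemma Kpoly_diff: "Kpoly d P \<Longrightarrow> Kpoly d Q \<Longrightarrow> Kpoly d (P - Q)"
  using Kpoly_add[of d P "- Q"] Kpoly_uminus[of d Q] by simp

lemma Kpoly_sum: "(\<And>a. a \<in> A \<Longrightarrow> Kpoly d (f a)) \<Longrightarrow> Kpoly d (sum f A)"
  by (induction A rule: infinite_finite_induct) (auto simp: Kpoly_add)

lemma Kpoly_single: "mon_in_vars d a \<Longrightarrow> algebraic c \<Longrightarrow> Kpoly d (Poly_Mapping.single a c)"
  by (auto simp: Kpoly_def lookup_single when_def)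

lemma Kpoly_mult: "Kpoly d P \<Longrightarrow> Kpoly d Q \<Longrightarrow> Kpoly d (P * Q)"
  unfolding mpoly_mult_conv_sum_single
  by (intro Kpoly_sum Kpoly_single mon_in_vars_add) (auto simp: Kpoly_def algebraic_mult)

lemma Kpoly_binomial: "mon_in_vars d a \<Longrightarrow> mon_in_vars d b \<Longrightarrow> Kpoly d (monom a - monom b)"
  unfolding monom_def by (intro Kpoly_diff Kpoly_single) auto

lemma gen_ideal_sum:
  assumes "finite A" "\<And>a. a \<in> A \<Longrightarrow> Kpoly d (q a) \<and> g a \<in> G"
  shows "(\<Sum>a\<in>A. q a * g a) \<in> gen_ideal d G"
proof -
  obtain f where f: "bij_betw f {..<card A} A"
    using ex_bij_betw_nat_finite[OF assms(1)] by (auto simp: atLeast0LessThan)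
  then have "(\<Sum>a\<in>A. q a * g a) = (\<Sum>i<card A. q (f i) * g (f i))"
    by (simp add: sum.reindex_bij_betw[OF f, of "\<lambda>a. q a * g a"])
  moreover have "\<forall>i<card A. Kpoly d (q (f i)) \<and> g (f i) \<in> G"
    using f assms(2) by (auto simp: bij_betw_def)
  ultimately show ?thesis
    unfolding gen_ideal_def
    by (intro CollectI exI[of _ "card A"] exI[of _ "q \<circ> f"] exI[of _ "g \<circ> f"]) simp
qed

lemma gen_ideal_Kpoly: "P \<in> gen_ideal d G \<Longrightarrow> (\<And>g. g \<in> G \<Longrightarrow> Kpoly d g) \<Longrightarrow> Kpoly d P"
  unfolding gen_ideal_def by (auto intro!: Kpoly_sum Kpoly_mult)

lemma gen_ideal_eval_eq_0:
  "P \<in> gen_ideal d G \<Longrightarrow> (\<And>g. g \<in> G \<Longrightarrow> eval_mpoly g x = 0) \<Longrightarrow> eval_mpoly P x = 0"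
  unfolding gen_ideal_def by (auto simp: eval_mpoly_sum eval_mpoly_mult)

section \<open>Invariant ideals of diagonal loops\<close>

lemma power_sums_eq_0_imp_coeffs_eq_0:
  fixes a :: "'a::idom \<Rightarrow> 'a"
  assumes "finite Z" and "\<And>n. (\<Sum>z\<in>Z. a z * z ^ n) = 0"
  shows "\<forall>z\<in>Z. a z = 0"
  using assms
proof (induction Z arbitrary: a rule: finite_induct)
  case empty
  then show ?case by simp
next
  case (insert z0 Z)
  have "(\<Sum>z\<in>Z. (a z * (z - z0)) * z ^ n) = 0" for n
  proof -
    have "(\<Sum>z\<in>Z. (a z * (z - z0)) * z ^ n) = (\<Sum>z\<in>insert z0 Z. a z * (z - z0) * z ^ n)"
      using insert(1,2) by simp
    also have "\<dots> = (\<Sum>z\<in>insert z0 Z. a z * z ^ Suc n) - z0 * (\<Sum>z\<in>insert z0 Z. a z * z ^ n)"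
      by (simp add: algebra_simps sum_subtractf sum_distrib_left)
    also have "\<dots> = 0"
      by (simp only: insert.prems) simp
    finally show ?thesis .
  qed
  then have "\<forall>z\<in>Z. a z * (z - z0) = 0"
    by (rule insert.IH)
  then have "\<forall>z\<in>Z. a z = 0"
    using insert(2) by auto
  moreover have "(\<Sum>z\<in>insert z0 Z. a z * z ^ 0) = 0"
    by (rule insert.prems)
  ultimately show ?case
    using insert(1,2) by simp
qed

lemma class_sums_eq_0_if_power_sums_eq_0:
  fixes h :: "'b \<Rightarrow> 'a::idom"
  assumes "finite K" and "\<And>n. (\<Sum>m\<in>K. c m * h m ^ n) = 0" and "m0 \<in> K"
  shows "(\<Sum>m | m \<in> K \<and> h m = h m0. c m) = 0"
proof -
  define a where "a z = (\<Sum>m | m \<in> K \<and> h m = z. c m)" for z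
  have "(\<Sum>z\<in>h ` K. a z * z ^ n) = 0" for n
  proof -
    have "(\<Sum>z\<in>h ` K. a z * z ^ n) = (\<Sum>z\<in>h ` K. \<Sum>m | m \<in> K \<and> h m = z. c m * h m ^ n)"
      unfolding a_def by (intro sum.cong refl) (simp add: sum_distrib_right)
    also have "\<dots> = (\<Sum>m\<in>K. c m * h m ^ n)"
      using sum.image_gen[OF assms(1), of "\<lambda>m. c m * h m ^ n" h] by simp
    finally show ?thesis
      using assms(2) by simp
  qed
  then have "\<forall>z\<in>h ` K. a z = 0"
    using assms(1) by (intro power_sums_eq_0_imp_coeffs_eq_0) auto
  then show ?thesis
    using assms(3) by (simp add: a_def)
qed

definition binomials :: "nat \<Rightarrow> ((nat \<Rightarrow>\<^sub>0 nat) \<Rightarrow> 'a) \<Rightarrow> mpoly set" where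
  "binomials d h = {monom a - monom b | a b. mon_in_vars d a \<and> mon_in_vars d b \<and> h a = h b}"

lemma sum_single_eq_0_if_fibre_sums_eq_0:
  assumes "finite K" and "\<And>m0. m0 \<in> K \<Longrightarrow> (\<Sum>m | m \<in> K \<and> r m = r m0. c m) = 0"
  shows "(\<Sum>m\<in>K. Poly_Mapping.single (r m) (c m)) = 0"
proof (rule poly_mapping_eqI)
  fix \<rho>
  have "Poly_Mapping.lookup (\<Sum>m\<in>K. Poly_Mapping.single (r m) (c m)) \<rho> = (\<Sum>m | m \<in> K \<and> r m = \<rho>. c m)"
    using assms(1) by (simp add: lookup_sum lookup_single when_def sum.inter_filter)
  also have "\<dots> = 0"
  proof (cases "\<exists>m0\<in>K. r m0 = \<rho>")
    case True
    then show ?thesis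
      using assms(2) by auto
  next
    case False
    then show ?thesis
      by (intro sum.neutral) auto
  qed
  finally show "Poly_Mapping.lookup (\<Sum>m\<in>K. Poly_Mapping.single (r m) (c m)) \<rho>
      = Poly_Mapping.lookup 0 \<rho>"
    by simp
qed

text \<open>With \<open>r m\<close> a fixed representative of the \<open>h\<close>-class of \<open>m\<close>, the polynomial equals
  \<open>\<Sum>\<^sub>m c\<^sub>m (x\<^sup>m - x\<^bsup>r m\<^esup>)\<close>, because the coefficients of each class sum to zero.\<close>
lemma in_binomial_ideal_if_class_sums_eq_0:
  assumes P: "Kpoly d P"
    and sums: "\<And>m0. m0 \<in> Poly_Mapping.keys P \<Longrightarrow>
      (\<Sum>m | m \<in> Poly_Mapping.keys P \<and> h m = h m0. Poly_Mapping.lookup P m) = 0"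
  shows "P \<in> gen_ideal d (binomials d h)"
proof -
  let ?K = "Poly_Mapping.keys P" and ?c = "Poly_Mapping.lookup P"
  define r where "r m = (SOME m'. m' \<in> ?K \<and> h m' = h m)" for m
  have r: "r m \<in> ?K \<and> h (r m) = h m" if "m \<in> ?K" for m
    unfolding r_def by (rule someI[of _ m]) (use that in simp)
  have r_eq_iff: "r m = r m0 \<longleftrightarrow> h m = h m0" if "m \<in> ?K" "m0 \<in> ?K" for m m0
  proof
    assume "r m = r m0"
    then show "h m = h m0"
      using r[OF that(1)] r[OF that(2)] by metis
  next
    assume "h m = h m0"
    then show "r m = r m0"
      by (simp add: r_def)
  qed
  have "(\<Sum>m\<in>?K. Poly_Mapping.single (r m) (?c m)) = 0"
    using sums r_eq_iff by (intro sum_single_eq_0_if_fibre_sums_eq_0) (simp_all cong: conj_cong)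
  then have "P = (\<Sum>m\<in>?K. Poly_Mapping.single 0 (?c m) * (monom m - monom (r m)))"
    by (simp add: monom_def right_diff_distrib mult_single sum_subtractf sum_single_lookup_keys)
  also have "\<dots> \<in> gen_ideal d (binomials d h)"
  proof (rule gen_ideal_sum)
    fix m assume m: "m \<in> ?K"
    then have "mon_in_vars d m" "mon_in_vars d (r m)"
      using P r[OF m] by (auto simp: Kpoly_def)
    moreover have "h m = h (r m)"
      using r[OF m] by simp
    ultimately have "monom m - monom (r m) \<in> binomials d h"
      unfolding binomials_def by blast
    moreover have "Kpoly d (Poly_Mapping.single 0 (?c m))"
      using P by (intro Kpoly_single) (auto simp: Kpoly_def mon_in_vars_def)
    ultimately show "Kpoly d (Poly_Mapping.single 0 (?c m)) \<and> monom m - monom (r m) \<in> binomials d h"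
      by blast
  qed simp
  finally show ?thesis .
qed

lemma in_binomial_ideal_if_power_sums_eq_0:
  fixes h :: "(nat \<Rightarrow>\<^sub>0 nat) \<Rightarrow> complex"
  assumes "Kpoly d P" and "\<And>n. (\<Sum>m\<in>Poly_Mapping.keys P. Poly_Mapping.lookup P m * h m ^ n) = 0"
  shows "P \<in> gen_ideal d (binomials d h)"
  using assms(1)
proof (rule in_binomial_ideal_if_class_sums_eq_0)
  show "(\<Sum>m | m \<in> Poly_Mapping.keys P \<and> h m = h m0. Poly_Mapping.lookup P m) = 0"
    if "m0 \<in> Poly_Mapping.keys P" for m0
    using assms(2) that by (intro class_sums_eq_0_if_power_sums_eq_0) simp_all
qed

lemma mat_diag_power: "mat_diag d f ^\<^sub>m n = mat_diag d (\<lambda>i. f i ^ n)"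
proof (induction n)
  case 0
  show ?case by (simp add: mat_diag_def)
next
  case (Suc n)
  then show ?case by (simp add: power_Suc2 del: power_Suc)
qed

lemma mat_diag_power_mult_ones:
  "i < d \<Longrightarrow> (mat_diag d f ^\<^sub>m n *\<^sub>v vec d (\<lambda>_. 1)) $ i = f i ^ n"
  unfolding mat_diag_power by (simp add: mat_diag_def scalar_prod_def row_def sum.delta)

lemma invariant_ideal_mat_diag:
  "invariant_ideal d (mat_diag d lam) (vec d (\<lambda>_. 1)) = gen_ideal d (binomials d (monom_eval lam))"
proof -
  define x where
    "x n = (\<lambda>i. if i < d then of_rat ((mat_diag d lam ^\<^sub>m n *\<^sub>v vec d (\<lambda>_. 1)) $ i)
                 else 0 :: complex)" for n
  have x: "monom_eval (x n) m = of_rat (monom_eval lam m) ^ n" if "mon_in_vars d m" for n m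
    using that by (simp add: monom_eval_in_vars x_def mat_diag_power_mult_ones of_rat_prod
        of_rat_power prod_power_distrib flip: power_mult) (simp add: mult.commute)
  have eval: "eval_mpoly P (x n)
      = (\<Sum>m\<in>Poly_Mapping.keys P. Poly_Mapping.lookup P m * of_rat (monom_eval lam m) ^ n)"
    if "Kpoly d P" for P n
    using that by (simp add: eval_mpoly_conv_monom_eval x Kpoly_def)
  have "invariant_ideal d (mat_diag d lam) (vec d (\<lambda>_. 1))
      = {P. Kpoly d P \<and> (\<forall>n. eval_mpoly P (x n) = 0)}"
    unfolding invariant_ideal_def x_def ..
  also have "\<dots> = gen_ideal d (binomials d (monom_eval lam))"
  proof (intro equalityI subsetI CollectI conjI allI)
    fix P assume P: "P \<in> gen_ideal d (binomials d (monom_eval lam))"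
    show "Kpoly d P"
      using P by (rule gen_ideal_Kpoly) (auto simp: binomials_def Kpoly_binomial)
    show "eval_mpoly P (x n) = 0" for n
      using P by (rule gen_ideal_eval_eq_0)
        (auto simp: binomials_def monom_def eval_mpoly_diff eval_mpoly_single x)
  next
    fix P assume "P \<in> {P. Kpoly d P \<and> (\<forall>n. eval_mpoly P (x n) = 0)}"
    then have "Kpoly d P" "\<And>n. eval_mpoly P (x n) = 0"
      by auto
    then have "P \<in> gen_ideal d (binomials d (\<lambda>m. of_rat (monom_eval lam m) :: complex))"
      by (intro in_binomial_ideal_if_power_sums_eq_0) (simp_all add: eval)
    then show "P \<in> gen_ideal d (binomials d (monom_eval lam))"
      by (simp add: binomials_def)
  qed
  finally show ?thesis .
qed

section \<open>The saturation of a lattice as a kernel\<close>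

definition dot :: "nat \<Rightarrow> (nat \<Rightarrow> int) \<Rightarrow> (nat \<Rightarrow> int) \<Rightarrow> int" where
  "dot d u w = (\<Sum>i<d. u i * w i)"

text \<open>\<open>perp_proj d v k\<close> is a positive integer multiple of the orthogonal projection of \<open>\<rat>\<^sup>d\<close>
  onto the orthogonal complement of \<open>v\<^sub>0, \<dots>, v\<^sub>k\<^sub>-\<^sub>1\<close>, computed by Gram--Schmidt; scaling
  by \<open>\<langle>w, w\<rangle>\<close> instead of dividing by it keeps it integral.\<close>
primrec perp_proj :: "nat \<Rightarrow> (nat \<Rightarrow> nat \<Rightarrow> int) \<Rightarrow> nat \<Rightarrow> (nat \<Rightarrow> int) \<Rightarrow> nat \<Rightarrow> int" where
  "perp_proj d v 0 = (\<lambda>u i. if i < d then u i else 0)"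
| "perp_proj d v (Suc k) =
    (if perp_proj d v k (v k) = (\<lambda>i. 0) then perp_proj d v k
     else (\<lambda>u i. dot d (perp_proj d v k (v k)) (perp_proj d v k (v k)) * perp_proj d v k u i
                 - dot d (perp_proj d v k u) (perp_proj d v k (v k)) * perp_proj d v k (v k) i))"

lemma dot_linear_left: "dot d (\<lambda>i. a * u i + b * w i) w' = a * dot d u w' + b * dot d w w'"
  by (simp add: dot_def algebra_simps sum.distrib sum_distrib_left)

lemma dot_self_eq_0_iff: "zvec d w \<Longrightarrow> dot d w w = 0 \<longleftrightarrow> w = (\<lambda>i. 0)"
  unfolding dot_def zvec_def
  by (subst sum_nonneg_eq_0_iff) (auto simp: fun_eq_iff not_less[symmetric])

lemma zvec_perp_proj: "zvec d (perp_proj d v k u)"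
  by (induction k arbitrary: u) (simp_all add: zvec_def)

lemma perp_proj_linear:
  "perp_proj d v k (\<lambda>i. a * u i + b * w i)
    = (\<lambda>i. a * perp_proj d v k u i + b * perp_proj d v k w i)"
proof (induction k arbitrary: u w)
  case 0
  then show ?case by auto
next
  case (Suc k)
  show ?case
    by (simp add: Suc.IH dot_linear_left) (simp add: fun_eq_iff algebra_simps)
qed

lemma perp_proj_sum:
  "finite J \<Longrightarrow> perp_proj d v k (\<lambda>i. \<Sum>j\<in>J. a j * f j i) = (\<lambda>i. \<Sum>j\<in>J. a j * perp_proj d v k (f j) i)"
proof (induction J rule: finite_induct)
  case empty
  show ?case
    using perp_proj_linear[of d v k 0 "\<lambda>i. 0" 0 "\<lambda>i. 0"] by simp
next
  case (insert j J)
  then show ?case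
    using perp_proj_linear[of d v k "a j" "f j" 1 "\<lambda>i. \<Sum>j\<in>J. a j * f j i"] by simp
qed

lemma perp_proj_smult: "perp_proj d v k (\<lambda>i. c * u i) = (\<lambda>i. c * perp_proj d v k u i)"
  using perp_proj_linear[of d v k c u 0 u] by simp

lemma perp_proj_generator: "j < k \<Longrightarrow> zvec d (v j) \<Longrightarrow> perp_proj d v k (v j) = (\<lambda>i. 0)"
proof (induction k)
  case 0
  then show ?case by simp
next
  case (Suc k)
  then consider "j < k" | "j = k"
    by linarith
  then show ?case
  proof cases
    case 1
    then show ?thesis
      using Suc by (simp add: dot_def)
  next
    case 2
    then show ?thesis
      by (simp add: algebra_simps)
  qed
qed

lemma perp_proj_Suc_conv_combination:
  obtains c b where "c \<noteq> 0" "perp_proj d v (Suc k) u = perp_proj d v k (\<lambda>i. c * u i + b * v k i)"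
proof (cases "perp_proj d v k (v k) = (\<lambda>i. 0)")
  case True
  then show ?thesis
    using that[of 1 0] by simp
next
  case False
  let ?w = "perp_proj d v k (v k)"
  let ?t = "dot d (perp_proj d v k u) ?w"
  have "dot d ?w ?w \<noteq> 0"
    using False dot_self_eq_0_iff zvec_perp_proj by blast
  moreover have "perp_proj d v k (\<lambda>i. dot d ?w ?w * u i + (- ?t) * v k i)
      = (\<lambda>i. dot d ?w ?w * perp_proj d v k u i + (- ?t) * ?w i)"
    by (rule perp_proj_linear)
  moreover have "\<dots> = perp_proj d v (Suc k) u"
    using False by simp
  ultimately show ?thesis
    using that by metis
qed

lemma Sat_lattice_span_iff:
  "u \<in> Sat d (lattice_span k v) \<longleftrightarrow>
    zvec d u \<and> (\<exists>c a. c \<noteq> 0 \<and> (\<lambda>i. c * u i) = (\<lambda>i. \<Sum>j<k. a j * v j i))"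
  by (auto simp: Sat_def lattice_span_def)

lemma in_Sat_lattice_span_SucI:
  assumes "(\<lambda>i. c * u i + b * v k i) \<in> Sat d (lattice_span k v)" "c \<noteq> 0" "zvec d u"
  shows "u \<in> Sat d (lattice_span (Suc k) v)"
proof -
  obtain c' a where c': "c' \<noteq> 0" "(\<lambda>i. c' * (c * u i + b * v k i)) = (\<lambda>i. \<Sum>j<k. a j * v j i)"
    using assms(1) unfolding Sat_lattice_span_iff by blast
  have "(\<lambda>i. (c' * c) * u i) = (\<lambda>i. \<Sum>j<Suc k. (a(k := - c' * b)) j * v j i)"
  proof
    fix i
    have "c' * (c * u i + b * v k i) = (\<Sum>j<k. a j * v j i)"
      using fun_cong[OF c'(2), of i] by simp
    then show "(c' * c) * u i = (\<Sum>j<Suc k. (a(k := - c' * b)) j * v j i)"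
      by (simp add: algebra_simps)
  qed
  moreover have "c' * c \<noteq> 0"
    using c'(1) assms(2) by simp
  ultimately show ?thesis
    using assms(3) unfolding Sat_lattice_span_iff by blast
qed

lemma perp_proj_eq_0_if_in_Sat:
  assumes "\<forall>j<k. zvec d (v j)" and "u \<in> Sat d (lattice_span k v)"
  shows "perp_proj d v k u = (\<lambda>i. 0)"
proof -
  obtain c a where c: "c \<noteq> 0" "(\<lambda>i. c * u i) = (\<lambda>i. \<Sum>j<k. a j * v j i)"
    using assms(2) by (auto simp: Sat_lattice_span_iff)
  have "(\<lambda>i. c * perp_proj d v k u i) = perp_proj d v k (\<lambda>i. \<Sum>j<k. a j * v j i)"
    by (simp flip: c(2) perp_proj_smult)
  also have "\<dots> = (\<lambda>i. 0)"
    using assms(1) by (simp add: perp_proj_sum perp_proj_generator)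
  finally show ?thesis
    using c(1) by (simp add: fun_eq_iff)
qed

lemma in_Sat_if_perp_proj_eq_0:
  assumes "perp_proj d v k u = (\<lambda>i. 0)" and "\<forall>j<k. zvec d (v j)" and "zvec d u"
  shows "u \<in> Sat d (lattice_span k v)"
  using assms
proof (induction k arbitrary: u)
  case 0
  then have "u = (\<lambda>i. 0)"
    by (auto simp: fun_eq_iff zvec_def split: if_splits) (metis not_less)
  then show ?case
    using 0 by (auto simp: Sat_lattice_span_iff intro!: exI[of _ 1])
next
  case (Suc k)
  obtain c b where cb: "c \<noteq> 0" "perp_proj d v (Suc k) u = perp_proj d v k (\<lambda>i. c * u i + b * v k i)"
    using perp_proj_Suc_conv_combination .
  have "zvec d (\<lambda>i. c * u i + b * v k i)"
    using Suc.prems(2,3) by (simp add: zvec_def)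
  then have "(\<lambda>i. c * u i + b * v k i) \<in> Sat d (lattice_span k v)"
    using Suc.IH Suc.prems(1,2) cb(2) by simp
  then show ?case
    using cb(1) Suc.prems(3) by (rule in_Sat_lattice_span_SucI)
qed

text \<open>Over \<open>\<rat>\<close> the kernel of a projection onto the orthogonal complement of \<open>L\<close> is the
  span of \<open>L\<close>; its integer points form the saturation of the lattice \<open>L\<close>.\<close>
lemma perp_proj_eq_0_iff:
  assumes "\<forall>j<k. zvec d (v j)" and "zvec d u"
  shows "perp_proj d v k u = (\<lambda>i. 0) \<longleftrightarrow> u \<in> Sat d (lattice_span k v)"
  using assms perp_proj_eq_0_if_in_Sat in_Sat_if_perp_proj_eq_0 by blast

section \<open>Prime weights\<close>

lemma prod_prime_powers_eq_imp_exps_eq: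
  fixes p a b :: "nat \<Rightarrow> nat"
  assumes "inj_on p {..<d}" "\<And>j. j < d \<Longrightarrow> prime (p j)"
    and "(\<Prod>j<d. p j ^ a j) = (\<Prod>j<d. p j ^ b j)" and "j0 < d"
  shows "a j0 = b j0"
proof -
  have p0: "p j \<noteq> 0" if "j < d" for j
    using assms(2)[OF that] by auto
  have "multiplicity (p j0) (\<Prod>j<d. p j ^ e j) = e j0" for e
  proof -
    have "multiplicity (p j0) (\<Prod>j<d. p j ^ e j) = (\<Sum>j<d. multiplicity (p j0) (p j ^ e j))"
      using assms(2,4) p0 by (intro prime_elem_multiplicity_prod_distrib)
        (auto simp: prime_imp_prime_elem image_iff)
    also have "\<dots> = (\<Sum>j<d. if j = j0 then e j else 0)"
      using assms(1,2,4) by (intro sum.cong refl)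
        (auto simp: inj_on_def prime_imp_prime_elem intro!: multiplicity_distinct_prime_power)
    finally show ?thesis
      using assms(4) by simp
  qed
  then show ?thesis
    using assms(3) by metis
qed

lemma prod_prime_powi_eq_1_iff:
  fixes p :: "nat \<Rightarrow> nat" and e :: "nat \<Rightarrow> int"
  assumes "inj_on p {..<d}" "\<And>j. j < d \<Longrightarrow> prime (p j)"
  shows "(\<Prod>j<d. (of_nat (p j) :: 'a :: field_char_0) powi e j) = 1 \<longleftrightarrow> (\<forall>j<d. e j = 0)"
proof
  assume prod: "(\<Prod>j<d. (of_nat (p j) :: 'a) powi e j) = 1"
  have "of_nat (p j) powi e j = (of_nat (p j) ^ nat (e j) / of_nat (p j) ^ nat (- e j) :: 'a)"
    if "j < d" for j
    using prime_gt_0_nat[OF assms(2)[OF that]]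
    by (cases "e j \<ge> 0") (auto simp: power_int_def power_one_over inverse_eq_divide)
  then have "(\<Prod>j<d. (of_nat (p j) :: 'a) powi e j)
      = (\<Prod>j<d. of_nat (p j) ^ nat (e j)) / (\<Prod>j<d. of_nat (p j) ^ nat (- e j))"
    by (simp add: prod_dividef)
  moreover have "(\<Prod>j<d. (of_nat (p j) :: 'a) ^ nat (- e j)) \<noteq> 0"
    using prime_gt_0_nat[OF assms(2)] by simp
  ultimately have "(of_nat (\<Prod>j<d. p j ^ nat (e j)) :: 'a) = of_nat (\<Prod>j<d. p j ^ nat (- e j))"
    using prod by (simp add: of_nat_prod)
  then have "(\<Prod>j<d. p j ^ nat (e j)) = (\<Prod>j<d. p j ^ nat (- e j))"
    by (simp only: of_nat_eq_iff)
  then have nat_eq: "nat (e j) = nat (- e j)" if "j < d" for j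
    using prod_prime_powers_eq_imp_exps_eq[of p d "\<lambda>j. nat (e j)" "\<lambda>j. nat (- e j)"] assms that
    by blast
  show "\<forall>j<d. e j = 0"
  proof (intro allI impI)
    fix j assume "j < d"
    from nat_eq[OF this] show "e j = 0"
      by arith
  qed
qed simp

definition prime_weights :: "nat \<Rightarrow> (nat \<Rightarrow> nat \<Rightarrow> int) \<Rightarrow> nat \<Rightarrow> (nat \<Rightarrow> nat) \<Rightarrow> nat \<Rightarrow> rat" where
  "prime_weights d v k p i = (\<Prod>j<d. of_nat (p j) powi perp_proj d v k (\<lambda>l. of_bool (l = i)) j)"

lemma prime_weights_nonzero:
  "(\<And>j. j < d \<Longrightarrow> prime (p j)) \<Longrightarrow> prime_weights d v k p i \<noteq> 0"
  by (auto simp: prime_weights_def prime_gt_0_nat power_int_not_zero)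

lemma prod_power_int: "(\<Prod>i\<in>A. f i) powi n = (\<Prod>i\<in>A. (f i :: 'a :: field) powi n)"
  by (induction A rule: infinite_finite_induct) (auto simp: power_int_mult_distrib)

lemma power_int_sum: "(x :: 'a :: field) \<noteq> 0 \<Longrightarrow> x powi (\<Sum>i\<in>A. e i) = (\<Prod>i\<in>A. x powi e i)"
  by (induction A rule: infinite_finite_induct) (auto simp: power_int_add)

lemma prod_prime_weights_powi:
  assumes "\<And>j. j < d \<Longrightarrow> prime (p j)" and "zvec d u"
  shows "(\<Prod>i<d. prime_weights d v k p i powi u i) = (\<Prod>j<d. of_nat (p j) powi perp_proj d v k u j)"
proof -
  let ?e = "\<lambda>i l. of_bool (l = i) :: int"
  have "u = (\<lambda>l. \<Sum>i<d. u i * ?e i l)"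
  proof
    fix l
    show "u l = (\<Sum>i<d. u i * ?e i l)"
      using assms(2) by (cases "l < d") (auto simp: zvec_def)
  qed
  then have "perp_proj d v k u = perp_proj d v k (\<lambda>l. \<Sum>i<d. u i * ?e i l)"
    by (rule arg_cong)
  also have "\<dots> = (\<lambda>j. \<Sum>i<d. u i * perp_proj d v k (?e i) j)"
    by (rule perp_proj_sum) simp
  finally have proj: "perp_proj d v k u = (\<lambda>j. \<Sum>i<d. u i * perp_proj d v k (?e i) j)" .
  have "(\<Prod>i<d. prime_weights d v k p i powi u i)
      = (\<Prod>i<d. \<Prod>j<d. of_nat (p j) powi (perp_proj d v k (?e i) j * u i))"
    by (simp add: prime_weights_def prod_power_int power_int_mult)
  also have "\<dots> = (\<Prod>j<d. \<Prod>i<d. of_nat (p j) powi (u i * perp_proj d v k (?e i) j))"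
    by (subst prod.swap) (simp add: mult.commute)
  also have "\<dots> = (\<Prod>j<d. of_nat (p j) powi perp_proj d v k u j)"
    using assms(1) by (simp add: proj power_int_sum prime_gt_0_nat)
  finally show ?thesis .
qed

lemma lookup_eq_0_if_mon_in_vars: "mon_in_vars d m \<Longrightarrow> d \<le> i \<Longrightarrow> Poly_Mapping.lookup m i = 0"
  unfolding mon_in_vars_def by (meson in_keys_iff lessThan_iff not_le subsetD)

lemma zvec_exp_vec: "mon_in_vars d a \<Longrightarrow> mon_in_vars d b \<Longrightarrow> zvec d (exp_vec a b)"
  by (simp add: zvec_def exp_vec_def lookup_eq_0_if_mon_in_vars)

lemma monom_eval_prime_weights_eq_iff:
  assumes p: "inj_on p {..<d}" "\<And>j. j < d \<Longrightarrow> prime (p j)"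
    and v: "\<forall>j<k. zvec d (v j)"
    and ab: "mon_in_vars d a" "mon_in_vars d b"
  shows "monom_eval (prime_weights d v k p) a = monom_eval (prime_weights d v k p) b
    \<longleftrightarrow> exp_vec a b \<in> Sat d (lattice_span k v)"
proof -
  let ?lam = "prime_weights d v k p" and ?u = "exp_vec a b"
  have u: "zvec d ?u"
    using ab by (rule zvec_exp_vec)
  have lam: "?lam i \<noteq> 0" for i
    using p(2) by (rule prime_weights_nonzero)
  have "monom_eval ?lam a / monom_eval ?lam b
      = (\<Prod>i<d. ?lam i ^ Poly_Mapping.lookup a i / ?lam i ^ Poly_Mapping.lookup b i)"
    using ab by (simp add: monom_eval_in_vars prod_dividef)
  also have "\<dots> = (\<Prod>i<d. ?lam i powi ?u i)"
    using lam by (simp add: exp_vec_def power_int_diff)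
  also have "\<dots> = (\<Prod>j<d. of_nat (p j) powi perp_proj d v k ?u j)"
    using p(2) u by (rule prod_prime_weights_powi)
  finally have quotient: "monom_eval ?lam a / monom_eval ?lam b = \<dots>" .
  have "monom_eval ?lam b \<noteq> 0"
    using ab(2) lam by (simp add: monom_eval_in_vars)
  then have "monom_eval ?lam a = monom_eval ?lam b \<longleftrightarrow> monom_eval ?lam a / monom_eval ?lam b = 1"
    by auto
  also have "\<dots> \<longleftrightarrow> (\<forall>j<d. perp_proj d v k ?u j = 0)"
    unfolding quotient by (rule prod_prime_powi_eq_1_iff[OF p])
  also have "\<dots> \<longleftrightarrow> perp_proj d v k ?u = (\<lambda>i. 0)"
    using zvec_perp_proj[of d v k ?u] by (auto simp: zvec_def fun_eq_iff not_less[symmetric])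
  also have "\<dots> \<longleftrightarrow> ?u \<in> Sat d (lattice_span k v)"
    using v u by (rule perp_proj_eq_0_iff)
  finally show ?thesis .
qed

theorem theorem3p7:
  fixes d k :: nat and \<alpha> \<beta> :: "nat \<Rightarrow> (nat \<Rightarrow>\<^sub>0 nat)"
  assumes "\<forall>j<k. mon_in_vars d (\<alpha> j) \<and> mon_in_vars d (\<beta> j)"
  shows "\<exists>M s. M \<in> carrier_mat d d \<and> diagonal_mat M \<and> s \<in> carrier_vec d \<and>
           invariant_ideal d M s
             = lattice_ideal d (Sat d (lattice_span k (\<lambda>j. exp_vec (\<alpha> j) (\<beta> j))))"
proof -
  define v where "v = (\<lambda>j. exp_vec (\<alpha> j) (\<beta> j))"
  have v: "\<forall>j<k. zvec d (v j)"
    using assms by (simp add: v_def zvec_exp_vec)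
  obtain p :: "nat \<Rightarrow> nat" where "inj p" "range p \<subseteq> {p. prime p}"
    using infinite_countable_subset[OF primes_infinite] by blast
  then have p: "inj_on p {..<d}" "\<And>j. j < d \<Longrightarrow> prime (p j)"
    by (auto intro: inj_on_subset)
  define lam where "lam = prime_weights d v k p"
  have "binomials d (monom_eval lam) = {monom a - monom b | a b.
      mon_in_vars d a \<and> mon_in_vars d b \<and> exp_vec a b \<in> Sat d (lattice_span k v)}"
    unfolding binomials_def lam_def using monom_eval_prime_weights_eq_iff[OF p v] by blast
  then have "invariant_ideal d (mat_diag d lam) (vec d (\<lambda>_. 1))
      = lattice_ideal d (Sat d (lattice_span k v))"
    by (simp add: invariant_ideal_mat_diag lattice_ideal_def)
  moreover have "diagonal_mat (mat_diag d lam)"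
    by (simp add: diagonal_mat_def mat_diag_def)
  ultimately show ?thesis
    unfolding v_def by (intro exI[of _ "mat_diag d lam"] exI[of _ "vec d (\<lambda>_. 1)"]) auto
qed

end
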